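(* Let $A\in\mathbb{C}^{m\times n}$. Then the following are equivalent: (1) $A^{\mathfrak{m}}$ exists; (2) there exists $X\in\mathbb{C}^{m\times m}$ such that $A=XAA^{\sim}A$; (3) there exists $Y\in\mathbb{C}^{n\times n}$ such that $A=AA^{\sim}AY$. In this case, for any such $X$ and $Y$, $A^{\mathfrak{m}}=(XA)^{\sim}=(AY)^{\sim}$.
   Context: For a positive integer $k$, the Minkowski metric matrix of order $k$ is $G_k=\mathrm{diag}(1,-I_{k-1})$ (with $G_1=(1)$). For $A\in\mathbb{C}^{m\times n}$, the Minkowski adjoint is $A^{\sim}=G_nA^*G_m$, where $A^*$ is the conjugate transpose. The Minkowski inverse of $A$, denoted $A^{\mathfrak{m}}$, is a matrix $Z\in\mathbb{C}^{n\times m}$ with $AZA=A$, $ZAZ=Z$, $(AZ)^{\sim}=AZ$, $(ZA)^{\sim}=ZA$ (unique if it exists). *)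

theory Defs
  imports "Jordan_Normal_Form.Matrix" Complex_Main
begin

definition conj_transpose :: "complex mat \<Rightarrow> complex mat" where
  "conj_transpose A = mat (dim_col A) (dim_row A) (\<lambda>(i,j). cnj (A $$ (j,i)))"

definition minkowski_G :: "nat \<Rightarrow> complex mat" where
  "minkowski_G k = mat k k (\<lambda>(i,j). if i = j then (if i = 0 then 1 else -1) else 0)"

definition minkowski_adjoint :: "complex mat \<Rightarrow> complex mat" where
  "minkowski_adjoint A = minkowski_G (dim_col A) * conj_transpose A * minkowski_G (dim_row A)"

definition is_minkowski_inverse :: "complex mat \<Rightarrow> complex mat \<Rightarrow> bool" where
  "is_minkowski_inverse A Z \<longleftrightarrow>
     Z \<in> carrier_mat (dim_col A) (dim_row A) \<and>
     A * Z * A = A \<and> Z * A * Z = Z \<and>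
     minkowski_adjoint (A * Z) = A * Z \<and> minkowski_adjoint (Z * A) = Z * A"

definition minkowski_inverse_exists :: "complex mat \<Rightarrow> bool" where
  "minkowski_inverse_exists A \<longleftrightarrow> (\<exists>Z. is_minkowski_inverse A Z)"

end

theory Submission
  imports Defs
begin

text \<open>Since \<open>G\<^sub>k G\<^sub>k = I\<close>, the Minkowski adjoint is an involution reversing products, so the
  Penrose equations can be manipulated as for the Moore-Penrose inverse in a ring with involution.
  If \<open>Z\<close> is the Minkowski inverse of \<open>A\<close>, then \<open>A = Z\<^sup>\<sim> Z A A\<^sup>\<sim> A\<close> and \<open>A = A A\<^sup>\<sim> A Z Z\<^sup>\<sim>\<close>.
  Conversely, from \<open>A = X A A\<^sup>\<sim> A\<close> one verifies the four Penrose equations for \<open>(X A)\<^sup>\<sim>\<close>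
  directly; the condition \<open>A = A A\<^sup>\<sim> A Y\<close> is the adjoint of the first one for \<open>A\<^sup>\<sim>\<close>.\<close>

notation minkowski_adjoint (\<open>_\<^sup>\<sim>\<close> [1000] 1000)

lemma dim_minkowski_G [simp]:
  "dim_row (minkowski_G k) = k" "dim_col (minkowski_G k) = k"
  by (simp_all add: minkowski_G_def)

lemma dim_conj_transpose [simp]:
  "dim_row (conj_transpose A) = dim_col A" "dim_col (conj_transpose A) = dim_row A"
  by (simp_all add: conj_transpose_def)

lemma dim_minkowski_adjoint [simp]:
  "dim_row (A\<^sup>\<sim>) = dim_col A" "dim_col (A\<^sup>\<sim>) = dim_row A"
  by (simp_all add: minkowski_adjoint_def)

lemma minkowski_adjoint_carrier_mat:
  "A \<in> carrier_mat m n \<Longrightarrow> A\<^sup>\<sim> \<in> carrier_mat n m"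
  by (intro carrier_matI) auto

lemma mult_assoc_dim:
  fixes A B C :: "'a :: semiring_0 mat"
  shows "dim_col A = dim_row B \<Longrightarrow> dim_col B = dim_row C \<Longrightarrow> A * B * C = A * (B * C)"
  by (rule assoc_mult_mat[of A "dim_row A" "dim_col A" B "dim_col B" C "dim_col C"]) auto

lemma minkowski_G_square: "minkowski_G k * minkowski_G k = 1\<^sub>m k"
proof (rule eq_matI)
  fix i j assume ij: "i < dim_row (1\<^sub>m k)" "j < dim_col (1\<^sub>m k)"
  then have "(minkowski_G k * minkowski_G k) $$ (i, j) =
      (\<Sum>l<k. minkowski_G k $$ (i, l) * minkowski_G k $$ (l, j))"
    by (simp add: scalar_prod_def atLeast0LessThan)
  also have "\<dots> = (\<Sum>l\<in>{i}. minkowski_G k $$ (i, l) * minkowski_G k $$ (l, j))"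
    using ij by (intro sum.mono_neutral_right) (auto simp: minkowski_G_def)
  also have "\<dots> = 1\<^sub>m k $$ (i, j)"
    using ij by (auto simp: minkowski_G_def)
  finally show "(minkowski_G k * minkowski_G k) $$ (i, j) = 1\<^sub>m k $$ (i, j)" .
qed simp_all

lemma conj_transpose_conj_transpose [simp]: "conj_transpose (conj_transpose A) = A"
  by (rule eq_matI) (auto simp: conj_transpose_def)

lemma conj_transpose_minkowski_G [simp]: "conj_transpose (minkowski_G k) = minkowski_G k"
  by (rule eq_matI) (auto simp: conj_transpose_def minkowski_G_def)

lemma conj_transpose_mult:
  "dim_col A = dim_row B \<Longrightarrow> conj_transpose (A * B) = conj_transpose B * conj_transpose A"
  by (rule eq_matI) (auto simp: conj_transpose_def scalar_prod_def cnj_sum mult.commute)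

lemma minkowski_adjoint_mult:
  assumes "dim_col A = dim_row B"
  shows "(A * B)\<^sup>\<sim> = B\<^sup>\<sim> * A\<^sup>\<sim>"
proof -
  let ?G = minkowski_G and ?C = conj_transpose
  have "B\<^sup>\<sim> * A\<^sup>\<sim> =
      ?G (dim_col B) * ?C B * (?G (dim_row B) * ?G (dim_col A)) * ?C A * ?G (dim_row A)"
    using assms by (simp add: minkowski_adjoint_def mult_assoc_dim)
  also have "\<dots> = ?G (dim_col B) * ?C B * ?C A * ?G (dim_row A)"
    using assms by (simp add: minkowski_G_square mult_assoc_dim)
  also have "\<dots> = (A * B)\<^sup>\<sim>"
    using assms by (simp add: minkowski_adjoint_def conj_transpose_mult mult_assoc_dim)
  finally show ?thesis ..
qed

lemma minkowski_adjoint_minkowski_adjoint [simp]: "A\<^sup>\<sim>\<^sup>\<sim> = A"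
proof -
  let ?G = minkowski_G
  have "A\<^sup>\<sim>\<^sup>\<sim> = (?G (dim_row A) * ?G (dim_row A)) * A * (?G (dim_col A) * ?G (dim_col A))"
    by (simp add: minkowski_adjoint_def conj_transpose_mult mult_assoc_dim)
  then show ?thesis
    by (simp add: minkowski_G_square)
qed

lemma is_minkowski_inverse_minkowski_adjoint:
  assumes inv: "is_minkowski_inverse A Z"
  shows "is_minkowski_inverse (A\<^sup>\<sim>) (Z\<^sup>\<sim>)"
proof -
  have dims [simp]: "dim_row Z = dim_col A" "dim_col Z = dim_row A"
    and AZA: "A * Z * A = A" and ZAZ: "Z * A * Z = Z"
    and AZ_herm: "(A * Z)\<^sup>\<sim> = A * Z" and ZA_herm: "(Z * A)\<^sup>\<sim> = Z * A"
    using inv by (auto simp: is_minkowski_inverse_def)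
  have "A\<^sup>\<sim> * Z\<^sup>\<sim> * A\<^sup>\<sim> = (A * Z * A)\<^sup>\<sim>"
    by (simp add: minkowski_adjoint_mult mult_assoc_dim)
  also have "\<dots> = A\<^sup>\<sim>"
    by (simp only: AZA)
  finally have AZA_adj: "A\<^sup>\<sim> * Z\<^sup>\<sim> * A\<^sup>\<sim> = A\<^sup>\<sim>" .
  have "Z\<^sup>\<sim> * A\<^sup>\<sim> * Z\<^sup>\<sim> = (Z * A * Z)\<^sup>\<sim>"
    by (simp add: minkowski_adjoint_mult mult_assoc_dim)
  also have "\<dots> = Z\<^sup>\<sim>"
    by (simp only: ZAZ)
  finally have ZAZ_adj: "Z\<^sup>\<sim> * A\<^sup>\<sim> * Z\<^sup>\<sim> = Z\<^sup>\<sim>" .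
  have "(A\<^sup>\<sim> * Z\<^sup>\<sim>)\<^sup>\<sim> = A\<^sup>\<sim> * Z\<^sup>\<sim>" "(Z\<^sup>\<sim> * A\<^sup>\<sim>)\<^sup>\<sim> = Z\<^sup>\<sim> * A\<^sup>\<sim>"
    using ZA_herm AZ_herm by (simp_all add: minkowski_adjoint_mult)
  moreover have "Z\<^sup>\<sim> \<in> carrier_mat (dim_col (A\<^sup>\<sim>)) (dim_row (A\<^sup>\<sim>))"
    by (rule carrier_matI) simp_all
  ultimately show ?thesis
    using AZA_adj ZAZ_adj unfolding is_minkowski_inverse_def by (intro conjI)
qed

lemma left_factorization_of_is_minkowski_inverse:
  assumes inv: "is_minkowski_inverse A Z"
  shows "A = Z\<^sup>\<sim> * Z * A * A\<^sup>\<sim> * A"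
proof -
  have dims: "dim_row Z = dim_col A" "dim_col Z = dim_row A"
    and AZA: "A * Z * A = A" and ZAZ: "Z * A * Z = Z"
    and AZ_herm: "(A * Z)\<^sup>\<sim> = A * Z" and ZA_herm: "(Z * A)\<^sup>\<sim> = Z * A"
    using inv by (auto simp: is_minkowski_inverse_def)
  have Zadj: "Z\<^sup>\<sim> = Z\<^sup>\<sim> * A\<^sup>\<sim> * Z\<^sup>\<sim>"
    using arg_cong[OF ZAZ, of minkowski_adjoint] dims
    by (simp add: minkowski_adjoint_mult mult_assoc_dim)
  have "A = (A * Z)\<^sup>\<sim> * A"
    using AZA AZ_herm dims by (simp add: mult_assoc_dim)
  also have "\<dots> = Z\<^sup>\<sim> * A\<^sup>\<sim> * A"
    using dims by (simp add: minkowski_adjoint_mult)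
  also have "\<dots> = Z\<^sup>\<sim> * A\<^sup>\<sim> * Z\<^sup>\<sim> * A\<^sup>\<sim> * A"
    by (simp only: Zadj[symmetric])
  also have "\<dots> = Z\<^sup>\<sim> * (Z * A)\<^sup>\<sim> * A\<^sup>\<sim> * A"
    using dims by (simp add: minkowski_adjoint_mult mult_assoc_dim)
  also have "\<dots> = Z\<^sup>\<sim> * Z * A * A\<^sup>\<sim> * A"
    using ZA_herm dims by (simp add: mult_assoc_dim)
  finally show ?thesis .
qed

lemma minkowski_adjoint_mult_eq_self:
  assumes dims: "dim_row Z = dim_col A" "dim_col Z = dim_row A"
    and ZAA: "Z * A * A\<^sup>\<sim> = A\<^sup>\<sim>"
  shows "(Z * A)\<^sup>\<sim> = Z * A"
proof -
  have "(Z * A)\<^sup>\<sim> = A\<^sup>\<sim> * Z\<^sup>\<sim>"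
    using dims by (simp add: minkowski_adjoint_mult)
  also have "\<dots> = Z * A * A\<^sup>\<sim> * Z\<^sup>\<sim>"
    by (simp only: ZAA)
  also have "\<dots> = Z * (Z * A * A\<^sup>\<sim>)\<^sup>\<sim>"
    using dims by (simp add: minkowski_adjoint_mult mult_assoc_dim)
  also have "\<dots> = Z * A"
    by (simp only: ZAA minkowski_adjoint_minkowski_adjoint)
  finally show ?thesis .
qed

lemma mult_minkowski_adjoint_of_left_factorization:
  assumes A: "A \<in> carrier_mat m n" and X: "X \<in> carrier_mat m m"
    and fac: "A = X * A * A\<^sup>\<sim> * A"
  shows "A * (X * A)\<^sup>\<sim> = X * A * A\<^sup>\<sim>"
proof -
  have dims [simp]: "dim_row A = m" "dim_col A = n" "dim_row X = m" "dim_col X = m"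
    using A X by auto
  from fac have "A\<^sup>\<sim> = (X * A * A\<^sup>\<sim> * A)\<^sup>\<sim>"
    by (rule arg_cong)
  also have "\<dots> = A\<^sup>\<sim> * A * (X * A)\<^sup>\<sim>"
    by (simp add: minkowski_adjoint_mult mult_assoc_dim)
  finally have A_adj: "A\<^sup>\<sim> = A\<^sup>\<sim> * A * (X * A)\<^sup>\<sim>" .
  have "A * (X * A)\<^sup>\<sim> = (X * A * A\<^sup>\<sim> * A) * (X * A)\<^sup>\<sim>"
    by (simp only: fac[symmetric])
  also have "\<dots> = X * A * (A\<^sup>\<sim> * A * (X * A)\<^sup>\<sim>)"
    by (simp add: mult_assoc_dim)
  also have "\<dots> = X * A * A\<^sup>\<sim>"
    by (simp only: A_adj[symmetric])
  finally show ?thesis .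
qed

lemma is_minkowski_inverse_of_left_factorization:
  assumes A: "A \<in> carrier_mat m n" and X: "X \<in> carrier_mat m m"
    and fac: "A = X * A * A\<^sup>\<sim> * A"
  shows "is_minkowski_inverse A ((X * A)\<^sup>\<sim>)"
proof -
  define Z where "Z = (X * A)\<^sup>\<sim>"
  have dims [simp]: "dim_row A = m" "dim_col A = n" "dim_row X = m" "dim_col X = m"
    "dim_row Z = n" "dim_col Z = m"
    using A X by (auto simp: Z_def)
  have Z_eq: "Z = A\<^sup>\<sim> * X\<^sup>\<sim>" and Z_adj: "Z\<^sup>\<sim> = X * A"
    by (simp_all add: Z_def minkowski_adjoint_mult)
  have AZ: "A * Z = X * A * A\<^sup>\<sim>"
    unfolding Z_def using A X fac by (rule mult_minkowski_adjoint_of_left_factorization)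
  have AZA: "A * Z * A = A"
    by (simp only: AZ fac[symmetric])
  have "(A * Z)\<^sup>\<sim> = Z\<^sup>\<sim> * A\<^sup>\<sim>"
    by (simp add: minkowski_adjoint_mult)
  also have "\<dots> = A * Z"
    by (simp only: Z_adj AZ)
  finally have AZ_herm: "(A * Z)\<^sup>\<sim> = A * Z" .
  from AZA have "A\<^sup>\<sim> = (A * Z * A)\<^sup>\<sim>"
    by (rule arg_cong[symmetric])
  also have "\<dots> = A\<^sup>\<sim> * X * A * A\<^sup>\<sim>"
    by (simp add: minkowski_adjoint_mult Z_adj mult_assoc_dim)
  finally have A_adj: "A\<^sup>\<sim> = A\<^sup>\<sim> * X * A * A\<^sup>\<sim>" .
  have "Z * A * A\<^sup>\<sim> = A\<^sup>\<sim> * X\<^sup>\<sim> * A * A\<^sup>\<sim>"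
    by (simp only: Z_eq)
  also have "\<dots> = A\<^sup>\<sim> * X * A * A\<^sup>\<sim> * X\<^sup>\<sim> * A * A\<^sup>\<sim>"
    using A_adj by (rule arg_cong[where f = "\<lambda>M. M * X\<^sup>\<sim> * A * A\<^sup>\<sim>"])
  also have "\<dots> = A\<^sup>\<sim> * X * (A * Z * A) * A\<^sup>\<sim>"
    by (simp add: Z_eq mult_assoc_dim)
  also have "\<dots> = A\<^sup>\<sim>"
    by (simp only: AZA A_adj[symmetric])
  finally have ZAA: "Z * A * A\<^sup>\<sim> = A\<^sup>\<sim>" .
  have "Z * A * Z = (Z * A * A\<^sup>\<sim>) * X\<^sup>\<sim>"
    by (simp add: Z_eq mult_assoc_dim)
  also have "\<dots> = Z"
    by (simp only: ZAA Z_eq[symmetric])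
  finally have ZAZ: "Z * A * Z = Z" .
  have "Z \<in> carrier_mat (dim_col A) (dim_row A)"
    by (rule carrier_matI) simp_all
  with AZA ZAZ AZ_herm minkowski_adjoint_mult_eq_self[OF _ _ ZAA] show ?thesis
    unfolding is_minkowski_inverse_def Z_def[symmetric] by simp
qed

lemma right_factorization_of_is_minkowski_inverse:
  assumes inv: "is_minkowski_inverse A Z"
  shows "A = A * A\<^sup>\<sim> * A * (Z * Z\<^sup>\<sim>)"
proof -
  have dims [simp]: "dim_row Z = dim_col A" "dim_col Z = dim_row A"
    using inv by (auto simp: is_minkowski_inverse_def)
  have "A\<^sup>\<sim> = Z * Z\<^sup>\<sim> * A\<^sup>\<sim> * A * A\<^sup>\<sim>"
    using left_factorization_of_is_minkowski_inverse[OF is_minkowski_inverse_minkowski_adjoint[OF inv]]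
    by (simp only: minkowski_adjoint_minkowski_adjoint)
  then have "A\<^sup>\<sim>\<^sup>\<sim> = (Z * Z\<^sup>\<sim> * A\<^sup>\<sim> * A * A\<^sup>\<sim>)\<^sup>\<sim>"
    by (rule arg_cong)
  also have "\<dots> = A * A\<^sup>\<sim> * A * (Z * Z\<^sup>\<sim>)"
    by (simp add: minkowski_adjoint_mult mult_assoc_dim)
  finally show ?thesis
    by (simp only: minkowski_adjoint_minkowski_adjoint)
qed

lemma is_minkowski_inverse_of_right_factorization:
  assumes A: "A \<in> carrier_mat m n" and Y: "Y \<in> carrier_mat n n"
    and fac: "A = A * A\<^sup>\<sim> * A * Y"
  shows "is_minkowski_inverse A ((A * Y)\<^sup>\<sim>)"
proof -
  have dims [simp]: "dim_row A = m" "dim_col A = n" "dim_row Y = n" "dim_col Y = n"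
    using A Y by auto
  from fac have "A\<^sup>\<sim> = (A * A\<^sup>\<sim> * A * Y)\<^sup>\<sim>"
    by (rule arg_cong)
  also have "\<dots> = Y\<^sup>\<sim> * A\<^sup>\<sim> * A\<^sup>\<sim>\<^sup>\<sim> * A\<^sup>\<sim>"
    by (simp add: minkowski_adjoint_mult mult_assoc_dim)
  finally have "is_minkowski_inverse (A\<^sup>\<sim>) ((Y\<^sup>\<sim> * A\<^sup>\<sim>)\<^sup>\<sim>)"
    using minkowski_adjoint_carrier_mat[OF A] minkowski_adjoint_carrier_mat[OF Y]
    by (intro is_minkowski_inverse_of_left_factorization)
  then have "is_minkowski_inverse (A\<^sup>\<sim>\<^sup>\<sim>) ((Y\<^sup>\<sim> * A\<^sup>\<sim>)\<^sup>\<sim>\<^sup>\<sim>)"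
    by (rule is_minkowski_inverse_minkowski_adjoint)
  then show ?thesis
    by (simp add: minkowski_adjoint_mult)
qed

theorem theorem6p1:
  fixes A :: "complex mat" and m n :: nat
  assumes "A \<in> carrier_mat m n"
  shows "(minkowski_inverse_exists A \<longleftrightarrow>
            (\<exists>X \<in> carrier_mat m m. A = X * A * minkowski_adjoint A * A)) \<and>
         (minkowski_inverse_exists A \<longleftrightarrow>
            (\<exists>Y \<in> carrier_mat n n. A = A * minkowski_adjoint A * A * Y)) \<and>
         (\<forall>X \<in> carrier_mat m m. A = X * A * minkowski_adjoint A * A \<longrightarrow>
               is_minkowski_inverse A (minkowski_adjoint (X * A))) \<and>
         (\<forall>Y \<in> carrier_mat n n. A = A * minkowski_adjoint A * A * Y \<longrightarrow>
               is_minkowski_inverse A (minkowski_adjoint (A * Y)))"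
proof -
  have left_factor: "\<exists>X \<in> carrier_mat m m. A = X * A * A\<^sup>\<sim> * A"
    and right_factor: "\<exists>Y \<in> carrier_mat n n. A = A * A\<^sup>\<sim> * A * Y"
    if "minkowski_inverse_exists A"
  proof -
    from that obtain Z where inv: "is_minkowski_inverse A Z"
      unfolding minkowski_inverse_exists_def by blast
    with assms have Z: "Z \<in> carrier_mat n m"
      by (simp add: is_minkowski_inverse_def)
    have "Z\<^sup>\<sim> * Z \<in> carrier_mat m m" "Z * Z\<^sup>\<sim> \<in> carrier_mat n n"
      using Z minkowski_adjoint_carrier_mat[OF Z] by auto
    with left_factorization_of_is_minkowski_inverse[OF inv]
      right_factorization_of_is_minkowski_inverse[OF inv]
    show "\<exists>X \<in> carrier_mat m m. A = X * A * A\<^sup>\<sim> * A"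
      and "\<exists>Y \<in> carrier_mat n n. A = A * A\<^sup>\<sim> * A * Y"
      by blast+
  qed
  show ?thesis
    using left_factor right_factor
      is_minkowski_inverse_of_left_factorization[OF assms]
      is_minkowski_inverse_of_right_factorization[OF assms]
    unfolding minkowski_inverse_exists_def by blast
qed

end
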